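(* Let $(V,L,\varphi,E)$ be a valuation system. Let $K$ be a sublattice of $V$ with $L$ a sublattice of $K$, and let $\psi:K\to E$ be a valuation which extends $\varphi$. Suppose $\psi$ is $\Pi$-extendible. Then $\varphi$ is $\Pi$-extendible and $\Pi\psi$ extends $\Pi\varphi$.
   Context: A valuation system $(V,L,\varphi,E)$ consists of: (i) a lattice $V$ which is $\sigma$-distributive, i.e. for every $a\in V$ and every sequence $(b_n)$ in $V$ whose infimum exists, $\bigwedge_n(a\vee b_n)$ exists and equals $a\vee\bigwedge_n b_n$, and dually for suprema; (ii) a sublattice $L$ of $V$; (iii) a partially ordered abelian group $E$ which is R-complete: whenever $x_1\ge x_2\ge\cdots$ and $y_1\ge y_2\ge\cdots$ in $E$ are such that $\bigwedge_n(x_n+y_n)$ exists, then $\bigwedge_n x_n$ and $\bigwedge_n y_n$ exist, and dually for increasing sequences and suprema; (iv) a valuation $\varphi:L\to E$, i.e. an order-preserving map with $\varphi(a\wedge b)+\varphi(a\vee b)=\varphi(a)+\varphi(b)$. A map $\psi:C\to E$ extends $\varphi:L\to E$ if $L\subseteq C$ and $\psi|_L=\varphi$. A decreasing sequence $a_1\ge a_2\ge\cdots$ in $L$ is $\varphi$-convergent if $\bigwedge_n a_n$ exists in $V$ and $\bigwedge_n\varphi(a_n)$ exists in $E$. Let $\Pi L:=\{\bigwedge_n a_n: (a_n)\text{ a }\varphi\text{-convergent decreasing sequence in }L\}$ (a sublattice of $V$). $\varphi$ is $\Pi$-extendible if there is a valuation $\Pi\varphi:\Pi L\to E$ with $\Pi\varphi(\bigwedge_n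 a_n)=\bigwedge_n\varphi(a_n)$ for every $\varphi$-convergent decreasing sequence $(a_n)$ in $L$; the same notions apply to $\psi$ on $K$. *)

theory Defs
  imports Main
begin

definition is_inf_of :: "'a::order set \<Rightarrow> 'a \<Rightarrow> bool" where
  "is_inf_of S x \<longleftrightarrow> (\<forall>s\<in>S. x \<le> s) \<and> (\<forall>y. (\<forall>s\<in>S. y \<le> s) \<longrightarrow> y \<le> x)"

definition is_sup_of :: "'a::order set \<Rightarrow> 'a \<Rightarrow> bool" where
  "is_sup_of S x \<longleftrightarrow> (\<forall>s\<in>S. s \<le> x) \<and> (\<forall>y. (\<forall>s\<in>S. s \<le> y) \<longrightarrow> x \<le> y)"

definition sigma_distributive :: "'v::lattice itself \<Rightarrow> bool" where
  "sigma_distributive _ \<longleftrightarrow>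
     (\<forall>(a::'v) (b::nat\<Rightarrow>'v) c. is_inf_of (range b) c \<longrightarrow> is_inf_of (range (\<lambda>n. sup a (b n))) (sup a c)) \<and>
     (\<forall>(a::'v) (b::nat\<Rightarrow>'v) c. is_sup_of (range b) c \<longrightarrow> is_sup_of (range (\<lambda>n. inf a (b n))) (inf a c))"

definition R_complete :: "'e::ordered_ab_group_add itself \<Rightarrow> bool" where
  "R_complete _ \<longleftrightarrow>
     (\<forall>(x::nat\<Rightarrow>'e) y. antimono x \<longrightarrow> antimono y \<longrightarrow> (\<exists>z. is_inf_of (range (\<lambda>n. x n + y n)) z) \<longrightarrow>
        (\<exists>u. is_inf_of (range x) u) \<and> (\<exists>v. is_inf_of (range y) v)) \<and>
     (\<forall>(x::nat\<Rightarrow>'e) y. mono x \<longrightarrow> mono y \<longrightarrow> (\<exists>z. is_sup_of (range (\<lambda>n. x n + y n)) z) \<longrightarrow>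
        (\<exists>u. is_sup_of (range x) u) \<and> (\<exists>v. is_sup_of (range y) v))"

definition sublattice :: "'v::lattice set \<Rightarrow> bool" where
  "sublattice L \<longleftrightarrow> (\<forall>a\<in>L. \<forall>b\<in>L. inf a b \<in> L \<and> sup a b \<in> L)"

definition valuation_on :: "'v::lattice set \<Rightarrow> ('v \<Rightarrow> 'e::ordered_ab_group_add) \<Rightarrow> bool" where
  "valuation_on C f \<longleftrightarrow> mono_on C f \<and>
     (\<forall>a\<in>C. \<forall>b\<in>C. f (inf a b) + f (sup a b) = f a + f b)"

definition phi_convergent :: "'v::lattice set \<Rightarrow> ('v \<Rightarrow> 'e::ordered_ab_group_add) \<Rightarrow> (nat \<Rightarrow> 'v) \<Rightarrow> bool" where
  "phi_convergent L \<phi> a \<longleftrightarrow> (\<forall>n. a n \<in> L) \<and> antimono a \<and>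
     (\<exists>x. is_inf_of (range a) x) \<and> (\<exists>y. is_inf_of (range (\<lambda>n. \<phi> (a n))) y)"

definition Pi_set :: "'v::lattice set \<Rightarrow> ('v \<Rightarrow> 'e::ordered_ab_group_add) \<Rightarrow> 'v set" where
  "Pi_set L \<phi> = {x. \<exists>a. phi_convergent L \<phi> a \<and> is_inf_of (range a) x}"

definition Pi_extension :: "'v::lattice set \<Rightarrow> ('v \<Rightarrow> 'e::ordered_ab_group_add) \<Rightarrow> ('v \<Rightarrow> 'e) \<Rightarrow> bool" where
  "Pi_extension L \<phi> f \<longleftrightarrow> valuation_on (Pi_set L \<phi>) f \<and>
     (\<forall>a x y. phi_convergent L \<phi> a \<longrightarrow> is_inf_of (range a) x \<longrightarrow>
        is_inf_of (range (\<lambda>n. \<phi> (a n))) y \<longrightarrow> f x = y)"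

definition Pi_extendible :: "'v::lattice set \<Rightarrow> ('v \<Rightarrow> 'e::ordered_ab_group_add) \<Rightarrow> bool" where
  "Pi_extendible L \<phi> \<longleftrightarrow> (\<exists>f. Pi_extension L \<phi> f)"

end

theory Submission
  imports Defs
begin

text \<open>A \<open>\<phi>\<close>-convergent sequence in \<open>L\<close> is \<open>\<psi>\<close>-convergent in \<open>K\<close> with the same limits,
  because \<open>\<psi>\<close> and \<open>\<phi>\<close> agree on its terms. Hence \<open>\<Pi>L \<subseteq> \<Pi>K\<close>, the restriction of \<open>\<Pi>\<psi>\<close> to
  \<open>\<Pi>L\<close> is a \<open>\<Pi>\<close>-extension of \<open>\<phi>\<close>, and any two \<open>\<Pi>\<close>-extensions of \<open>\<phi>\<close> agree, since each
  point of \<open>\<Pi>L\<close> is a limit of some \<open>\<phi>\<close>-convergent sequence.\<close>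

lemma valuation_on_subset:
  assumes "valuation_on K f" and "C \<subseteq> K"
  shows "valuation_on C f"
  using assms unfolding valuation_on_def by (meson mono_on_subset subsetD)

context
  fixes L K :: "'v::lattice set" and \<phi> \<psi> :: "'v \<Rightarrow> 'e::ordered_ab_group_add"
  assumes sub: "L \<subseteq> K" and agree: "\<forall>x\<in>L. \<psi> x = \<phi> x"
begin

lemma values_eq_if_phi_convergent:
  assumes "phi_convergent L \<phi> a"
  shows "(\<lambda>n. \<psi> (a n)) = (\<lambda>n. \<phi> (a n))"
  using assms agree unfolding phi_convergent_def by auto

lemma phi_convergent_extension:
  assumes "phi_convergent L \<phi> a"
  shows "phi_convergent K \<psi> a"
  using assms sub unfolding phi_convergent_def values_eq_if_phi_convergent[OF assms] by auto

lemma Pi_set_subset_extension: "Pi_set L \<phi> \<subseteq> Pi_set K \<psi>"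
  unfolding Pi_set_def using phi_convergent_extension by blast

lemma Pi_extension_restrict:
  assumes "Pi_extension K \<psi> \<Psi>"
  shows "Pi_extension L \<phi> \<Psi>"
  unfolding Pi_extension_def
proof (intro conjI allI impI)
  show "valuation_on (Pi_set L \<phi>) \<Psi>"
    using assms Pi_set_subset_extension valuation_on_subset
    unfolding Pi_extension_def by blast
next
  fix a x y
  assume a: "phi_convergent L \<phi> a" and x: "is_inf_of (range a) x"
    and y: "is_inf_of (range (\<lambda>n. \<phi> (a n))) y"
  have "is_inf_of (range (\<lambda>n. \<psi> (a n))) y"
    using y unfolding values_eq_if_phi_convergent[OF a] .
  then show "\<Psi> x = y"
    using assms phi_convergent_extension[OF a] x unfolding Pi_extension_def by blast
qed

end

lemma Pi_extension_unique:
  assumes "Pi_extension L \<phi> f" and "Pi_extension L \<phi> g" and "x \<in> Pi_set L \<phi>"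
  shows "f x = g x"
proof -
  obtain a where a: "phi_convergent L \<phi> a" "is_inf_of (range a) x"
    using assms(3) unfolding Pi_set_def by blast
  then obtain y where y: "is_inf_of (range (\<lambda>n. \<phi> (a n))) y"
    unfolding phi_convergent_def by blast
  show ?thesis
    using assms(1,2) a y unfolding Pi_extension_def by metis
qed

theorem lemma5p6:
  fixes L K :: "'v::lattice set"
    and \<phi> \<psi> \<Psi> :: "'v \<Rightarrow> 'e::ordered_ab_group_add"
  assumes "sigma_distributive TYPE('v)"
    and "R_complete TYPE('e)"
    and "sublattice L"
    and "valuation_on L \<phi>"
    and "sublattice K"
    and "L \<subseteq> K"
    and "valuation_on K \<psi>"
    and "\<forall>x\<in>L. \<psi> x = \<phi> x"
    and "Pi_extension K \<psi> \<Psi>"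
  shows "Pi_extendible L \<phi> \<and> Pi_set L \<phi> \<subseteq> Pi_set K \<psi> \<and>
         (\<forall>f. Pi_extension L \<phi> f \<longrightarrow> (\<forall>x\<in>Pi_set L \<phi>. \<Psi> x = f x))"
proof -
  have restrict: "Pi_extension L \<phi> \<Psi>"
    using Pi_extension_restrict[OF assms(6,8,9)] .
  then have "Pi_extendible L \<phi>"
    unfolding Pi_extendible_def by blast
  moreover have "Pi_set L \<phi> \<subseteq> Pi_set K \<psi>"
    using Pi_set_subset_extension[OF assms(6,8)] .
  moreover have "\<forall>f. Pi_extension L \<phi> f \<longrightarrow> (\<forall>x\<in>Pi_set L \<phi>. \<Psi> x = f x)"
    using Pi_extension_unique[OF restrict] by blast
  ultimately show ?thesis by blast
qed

end
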